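(* Let $\mathcal{M}=(S,A,\delta)$ be a finite fuzzy transition system and let $\gamma=1$. Define $d_0=\bot$ (where $\bot(s,t)=0$ for all $s,t\in S$) and $d_{n+1}=\Delta(d_n)$. Then the number of iterations until $d_n=d_{n+1}$ holds for the first time is bounded by a polynomial in the size $|\mathcal{M}|$.
   Context: A fuzzy set on a finite set $X$ is a map $\mu:X\to[0,1]$; $\mathcal{F}(X)$ is the set of fuzzy sets on $X$; $\mu(U)=\max_{x\in U}\mu(x)$; $\mathsf{Supp}(\mu)=\{x\mid\mu(x)>0\}$. A fuzzy transition system is $\mathcal{M}=(S,A,\delta)$ with $S,A$ finite and $\delta:S\times A\to\mathcal{P}(\mathcal{F}(S))$, each $\delta(s,a)$ finite. Its size is $|\mathcal{M}|=|S|+\sum_{s\in S,a\in A,\mu\in\delta(s,a)}|\mathsf{Supp}(\mu)|$. $\mathcal{D}(S)$ is the set of pseudo-ultrametrics $d:S\times S\to[0,1]$, ordered pointwise. Lifting: $\hat d(\mu,\eta)=1$ if $\mu(S)\ne\eta(S)$, and otherwise $\hat d(\mu,\eta)$ is the minimum of $\max_{u,v}\min(d(u,v),x_{uv})$ over $x_{uv}\ge0$ with $\max_v x_{uv}=\mu(u)$ for all $u$ and $\max_u x_{uv}=\eta(v)$ for all $v$. For finite $Z\subseteq\mathcal{F}(S)$: $\hat d(\mu,Z)=\min_{\eta\in Z}\hat d(\mu,\eta)$ if $Z\ne\emptyset$, else $1$. Hausdorff distance: $H_{\hat d}(\emptyset,\emptyset)=0$, otherwise $H_{\hat d}(Y,Z)=\max(\max_{\mu\in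 Y}\hat d(\mu,Z),\max_{\eta\in Z}\hat d(\eta,Y))$. With discounting factor $\gamma\in(0,1]$, $\Delta(d)(s,t)=\gamma\cdot\max_{a\in A}H_{\hat d}(\delta(s,a),\delta(t,a))$. *)

theory Defs
  imports Complex_Main
begin

type_synonym fuzzy = "nat \<Rightarrow> real"
type_synonym dist = "nat \<Rightarrow> nat \<Rightarrow> real"

definition fuzzy_set_on :: "nat set \<Rightarrow> fuzzy \<Rightarrow> bool" where
  "fuzzy_set_on S \<mu> \<longleftrightarrow> (\<forall>x. 0 \<le> \<mu> x \<and> \<mu> x \<le> 1) \<and> (\<forall>x. x \<notin> S \<longrightarrow> \<mu> x = 0)"

definition fts :: "nat set \<Rightarrow> nat set \<Rightarrow> (nat \<Rightarrow> nat \<Rightarrow> fuzzy set) \<Rightarrow> bool" where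
  "fts S A \<delta> \<longleftrightarrow> finite S \<and> finite A \<and>
     (\<forall>s\<in>S. \<forall>a\<in>A. finite (\<delta> s a) \<and> (\<forall>\<mu>\<in>\<delta> s a. fuzzy_set_on S \<mu>))"

definition supp :: "nat set \<Rightarrow> fuzzy \<Rightarrow> nat set" where
  "supp S \<mu> = {x\<in>S. \<mu> x > 0}"

definition fts_size :: "nat set \<Rightarrow> nat set \<Rightarrow> (nat \<Rightarrow> nat \<Rightarrow> fuzzy set) \<Rightarrow> nat" where
  "fts_size S A \<delta> = card S + (\<Sum>s\<in>S. \<Sum>a\<in>A. \<Sum>\<mu>\<in>\<delta> s a. card (supp S \<mu>))"

text \<open>mu(U) = max over U of mu (values are nonnegative, so inserting 0 only matters for U empty).\<close>
definition fmax :: "nat set \<Rightarrow> fuzzy \<Rightarrow> real" where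
  "fmax U \<mu> = Max (insert 0 (\<mu> ` U))"

definition coupling :: "nat set \<Rightarrow> fuzzy \<Rightarrow> fuzzy \<Rightarrow> (nat \<Rightarrow> nat \<Rightarrow> real) \<Rightarrow> bool" where
  "coupling S \<mu> \<eta> x \<longleftrightarrow> (\<forall>u\<in>S. \<forall>v\<in>S. 0 \<le> x u v)
     \<and> (\<forall>u\<in>S. Max ((\<lambda>v. x u v) ` S) = \<mu> u)
     \<and> (\<forall>v\<in>S. Max ((\<lambda>u. x u v) ` S) = \<eta> v)"

text \<open>Lifting of d to fuzzy sets (the minimum over couplings, written as an infimum;
  the minimum is attained).\<close>
definition lift :: "nat set \<Rightarrow> dist \<Rightarrow> fuzzy \<Rightarrow> fuzzy \<Rightarrow> real" where
  "lift S d \<mu> \<eta> = (if fmax S \<mu> \<noteq> fmax S \<eta> then 1 else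
     Inf {Max ((\<lambda>(u,v). min (d u v) (x u v)) ` (S \<times> S)) | x. coupling S \<mu> \<eta> x})"

definition lift_set :: "nat set \<Rightarrow> dist \<Rightarrow> fuzzy \<Rightarrow> fuzzy set \<Rightarrow> real" where
  "lift_set S d \<mu> Z = (if Z = {} then 1 else Min ((\<lambda>\<eta>. lift S d \<mu> \<eta>) ` Z))"

definition hausdorff :: "nat set \<Rightarrow> dist \<Rightarrow> fuzzy set \<Rightarrow> fuzzy set \<Rightarrow> real" where
  "hausdorff S d Y Z = (if Y = {} \<and> Z = {} then 0 else
     max (Max (insert 0 ((\<lambda>\<mu>. lift_set S d \<mu> Z) ` Y)))
         (Max (insert 0 ((\<lambda>\<eta>. lift_set S d \<eta> Y) ` Z))))"

definition Delta :: "real \<Rightarrow> nat set \<Rightarrow> nat set \<Rightarrow> (nat \<Rightarrow> nat \<Rightarrow> fuzzy set) \<Rightarrow> dist \<Rightarrow> dist" where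
  "Delta \<gamma> S A \<delta> d = (\<lambda>s t. if s \<in> S \<and> t \<in> S then
     \<gamma> * Max (insert 0 ((\<lambda>a. hausdorff S d (\<delta> s a) (\<delta> t a)) ` A)) else 0)"

definition bot_dist :: dist where "bot_dist = (\<lambda>s t. 0)"

definition iter_dist :: "real \<Rightarrow> nat set \<Rightarrow> nat set \<Rightarrow> (nat \<Rightarrow> nat \<Rightarrow> fuzzy set) \<Rightarrow> nat \<Rightarrow> dist" where
  "iter_dist \<gamma> S A \<delta> n = (Delta \<gamma> S A \<delta> ^^ n) bot_dist"

end

theory Submission
  imports Defs
begin

text \<open>Every iterate takes its values in the finite set \<open>V\<close> of \<open>0\<close>, \<open>1\<close> and the membership degrees
  occurring in the system: an optimal coupling can be rounded so that its cost is a value of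
  \<open>d\<close>, \<open>0\<close> or a membership degree, hence lifting, Hausdorff distance and \<open>\<Delta>\<close> preserve
  \<open>V\<close>-valuedness. As \<open>\<Delta>\<close> is monotone and \<open>d\<^sub>0 = \<bottom>\<close>, the iterates increase pointwise, so as long
  as \<open>d\<^sub>n \<noteq> \<Delta> d\<^sub>n\<close> the number of triples \<open>(s, t, c)\<close> with \<open>c \<in> V\<close> and \<open>c \<le> d\<^sub>n(s, t)\<close> strictly
  grows. It is at most \<open>|S|\<^sup>2 |V| \<le> 3 |\<M>|\<^sup>3\<close>.\<close>

lemma Max_image_mono:
  fixes f g :: "'a \<Rightarrow> 'b::linorder"
  assumes "finite A" "A \<noteq> {}" "\<And>a. a \<in> A \<Longrightarrow> f a \<le> g a"
  shows "Max (f ` A) \<le> Max (g ` A)"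
proof -
  have "Max (f ` A) \<in> f ` A" using assms(1,2) by (intro Max_in) auto
  then obtain a where "a \<in> A" "Max (f ` A) = f a" by auto
  moreover have "g a \<le> Max (g ` A)" if "a \<in> A" using that assms(1) by simp
  ultimately show ?thesis using assms(3) by (metis order.trans)
qed

lemma Min_image_mono:
  fixes f g :: "'a \<Rightarrow> 'b::linorder"
  assumes "finite A" "A \<noteq> {}" "\<And>a. a \<in> A \<Longrightarrow> f a \<le> g a"
  shows "Min (f ` A) \<le> Min (g ` A)"
  using assms by (auto simp: Min_le_iff)

lemma Max_insert_image_mono:
  fixes f g :: "'a \<Rightarrow> 'b::linorder"
  assumes "finite A" "\<And>a. a \<in> A \<Longrightarrow> f a \<le> g a"
  shows "Max (insert c (f ` A)) \<le> Max (insert c (g ` A))"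
proof (cases "A = {}")
  case False
  then have "Max (insert c (f ` A)) = max c (Max (f ` A))"
    and "Max (insert c (g ` A)) = max c (Max (g ` A))"
    using assms(1) by simp_all
  moreover have "Max (f ` A) \<le> Max (g ` A)" using assms False by (intro Max_image_mono)
  ultimately show ?thesis by (metis max.mono order_refl)
qed simp

lemma Max_insert_image_in:
  fixes f :: "'a \<Rightarrow> 'b::linorder"
  assumes "finite A" "c \<in> V" "f ` A \<subseteq> V"
  shows "Max (insert c (f ` A)) \<in> V"
  using Max_in[of "insert c (f ` A)"] assms by auto

lemma coupling_iff:
  assumes "finite S" "S \<noteq> {}"
  shows "coupling S \<mu> \<eta> x \<longleftrightarrow>
    (\<forall>u\<in>S. \<forall>v\<in>S. 0 \<le> x u v \<and> x u v \<le> \<mu> u \<and> x u v \<le> \<eta> v) \<and>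
    (\<forall>u\<in>S. \<exists>v\<in>S. x u v = \<mu> u) \<and> (\<forall>v\<in>S. \<exists>u\<in>S. x u v = \<eta> v)"
    (is "_ \<longleftrightarrow> ?bounded \<and> ?rows \<and> ?cols")
proof
  assume x: "coupling S \<mu> \<eta> x"
  have row: "Max ((\<lambda>v. x u v) ` S) = \<mu> u" if "u \<in> S" for u
    using x that by (simp add: coupling_def)
  have col: "Max ((\<lambda>u. x u v) ` S) = \<eta> v" if "v \<in> S" for v
    using x that by (simp add: coupling_def)
  have "0 \<le> x u v \<and> x u v \<le> \<mu> u \<and> x u v \<le> \<eta> v" if "u \<in> S" "v \<in> S" for u v
  proof -
    have "x u v \<le> Max ((\<lambda>v. x u v) ` S)" "x u v \<le> Max ((\<lambda>u. x u v) ` S)"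
      using assms(1) that by simp_all
    then show ?thesis using x that by (simp add: coupling_def row col)
  qed
  moreover have "\<exists>v\<in>S. x u v = \<mu> u" if "u \<in> S" for u
  proof -
    have "Max ((\<lambda>v. x u v) ` S) \<in> (\<lambda>v. x u v) ` S" using assms by (intro Max_in) auto
    then show ?thesis using row[OF that] by force
  qed
  moreover have "\<exists>u\<in>S. x u v = \<eta> v" if "v \<in> S" for v
  proof -
    have "Max ((\<lambda>u. x u v) ` S) \<in> (\<lambda>u. x u v) ` S" using assms by (intro Max_in) auto
    then show ?thesis using col[OF that] by force
  qed
  ultimately show "?bounded \<and> ?rows \<and> ?cols" by blast
next
  assume "?bounded \<and> ?rows \<and> ?cols"
  then have bounded: ?bounded and rows: ?rows and cols: ?cols by blast+
  have "Max ((\<lambda>v. x u v) ` S) = \<mu> u" if "u \<in> S" for u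
  proof (rule Max_eqI)
    show "\<mu> u \<in> (\<lambda>v. x u v) ` S" using rows that by force
  qed (use assms(1) bounded that in auto)
  moreover have "Max ((\<lambda>u. x u v) ` S) = \<eta> v" if "v \<in> S" for v
  proof (rule Max_eqI)
    show "\<eta> v \<in> (\<lambda>u. x u v) ` S" using cols that by force
  qed (use assms(1) bounded that in auto)
  ultimately show "coupling S \<mu> \<eta> x" using bounded by (simp add: coupling_def)
qed

lemma fmax_eq_Max:
  assumes "finite S" "S \<noteq> {}" "\<forall>x. 0 \<le> \<mu> x"
  shows "fmax S \<mu> = Max (\<mu> ` S)"
  unfolding fmax_def using assms by (subst Max_insert) (auto simp: max_def Max_ge_iff)

lemma coupling_min_marginals:
  assumes "finite S" "S \<noteq> {}" "\<forall>x. 0 \<le> \<mu> x" "\<forall>x. 0 \<le> \<eta> x" "fmax S \<mu> = fmax S \<eta>"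
  shows "coupling S \<mu> \<eta> (\<lambda>u v. min (\<mu> u) (\<eta> v))"
proof -
  have "Max (\<mu> ` S) \<in> \<mu> ` S" "Max (\<eta> ` S) \<in> \<eta> ` S"
    using assms(1,2) by simp_all
  then obtain u0 v0 where u0: "u0 \<in> S" "\<mu> u0 = fmax S \<mu>" and v0: "v0 \<in> S" "\<eta> v0 = fmax S \<eta>"
    using fmax_eq_Max[OF assms(1,2,3)] fmax_eq_Max[OF assms(1,2,4)] by auto
  have "\<mu> u \<le> fmax S \<mu>" "\<eta> u \<le> fmax S \<eta>" if "u \<in> S" for u
    using that assms(1) by (simp_all add: fmax_def)
  then have "\<mu> u \<le> \<eta> v0" "\<eta> u \<le> \<mu> u0" if "u \<in> S" for u
    using that u0 v0 assms(5) by simp_all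
  then have "\<exists>v\<in>S. min (\<mu> u) (\<eta> v) = \<mu> u" "\<exists>w\<in>S. min (\<mu> w) (\<eta> u) = \<eta> u" if "u \<in> S" for u
    using that u0(1) v0(1) by (metis min.absorb1 min.absorb2)+
  then show ?thesis
    unfolding coupling_iff[OF assms(1,2)] using assms(3,4) by auto
qed

definition coupling_cost :: "nat set \<Rightarrow> dist \<Rightarrow> (nat \<Rightarrow> nat \<Rightarrow> real) \<Rightarrow> real" where
  "coupling_cost S d x = Max ((\<lambda>(u, v). min (d u v) (x u v)) ` (S \<times> S))"

lemma coupling_cost_attained:
  assumes "finite S" "S \<noteq> {}"
  shows "\<exists>u\<in>S. \<exists>v\<in>S. coupling_cost S d x = min (d u v) (x u v)"
proof -
  have "coupling_cost S d x \<in> (\<lambda>(u, v). min (d u v) (x u v)) ` (S \<times> S)"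
    unfolding coupling_cost_def using assms by (intro Max_in) auto
  then show ?thesis by auto
qed

lemma coupling_cost_mono:
  assumes "finite S" "S \<noteq> {}" "\<And>u v. u \<in> S \<Longrightarrow> v \<in> S \<Longrightarrow> min (d u v) (x u v) \<le> min (d' u v) (x' u v)"
  shows "coupling_cost S d x \<le> coupling_cost S d' x'"
  unfolding coupling_cost_def using assms by (intro Max_image_mono) auto

text \<open>Entries with \<open>d u v \<le> x u v\<close> can be raised to \<open>min (\<mu> u) (\<eta> v)\<close>, and all others
  rounded down to the next value among \<open>0\<close>, \<open>\<mu>\<close> and \<open>\<eta>\<close>, without increasing the cost; entries
  attaining a marginal keep their value.\<close>
lemma coupling_rounding:
  assumes fin: "finite S" and ne: "S \<noteq> {}" and x: "coupling S \<mu> \<eta> x"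
  shows "\<exists>x'. coupling S \<mu> \<eta> x' \<and> coupling_cost S d x' \<le> coupling_cost S d x \<and>
           coupling_cost S d x' \<in> case_prod d ` (S \<times> S) \<union> insert 0 (\<mu> ` S \<union> \<eta> ` S)"
proof -
  define C where "C = insert 0 (\<mu> ` S \<union> \<eta> ` S)"
  define round where "round t = Max {c \<in> C. c \<le> t}" for t
  have "finite C" using fin by (simp add: C_def)
  have round: "round t \<in> C \<and> 0 \<le> round t \<and> round t \<le> t" if "0 \<le> t" for t
  proof -
    have "0 \<in> {c \<in> C. c \<le> t}" using that by (simp add: C_def)
    then have "round t \<in> {c \<in> C. c \<le> t}" and "0 \<le> round t"
      unfolding round_def using \<open>finite C\<close> by (intro Max_in Max_ge; auto)+
    then show ?thesis by simp
  qed
  have round_C: "round c = c" if "c \<in> C" for c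
    unfolding round_def using \<open>finite C\<close> that by (intro Max_eqI) auto
  define x' where "x' u v = (if d u v \<le> x u v then min (\<mu> u) (\<eta> v) else round (x u v))" for u v
  note x_props = x[unfolded coupling_iff[OF fin ne]]
  have x'_bounded: "x' u v \<in> C \<and> 0 \<le> x' u v \<and> x' u v \<le> \<mu> u \<and> x' u v \<le> \<eta> v"
    if "u \<in> S" "v \<in> S" for u v
  proof -
    have "0 \<le> x u v" "x u v \<le> \<mu> u" "x u v \<le> \<eta> v" using that x_props by auto
    then show ?thesis using that round[of "x u v"] by (auto simp: x'_def C_def min_def)
  qed
  have x'_eq: "x' u v = x u v" if "u \<in> S" "v \<in> S" "x u v = \<mu> u \<or> x u v = \<eta> v" for u v
  proof -
    have "x u v \<le> \<mu> u" "x u v \<le> \<eta> v" using that x_props by auto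
    then show ?thesis using that round_C by (auto simp: x'_def C_def min_def)
  qed
  have "coupling S \<mu> \<eta> x'"
    unfolding coupling_iff[OF fin ne] using x_props x'_bounded x'_eq by metis
  moreover have "coupling_cost S d x' \<le> coupling_cost S d x"
  proof (rule coupling_cost_mono[OF fin ne])
    fix u v assume "u \<in> S" "v \<in> S"
    then have "0 \<le> x u v" using x_props by auto
    then show "min (d u v) (x' u v) \<le> min (d u v) (x u v)"
      using round[of "x u v"] by (auto simp: x'_def)
  qed
  moreover have "coupling_cost S d x' \<in> case_prod d ` (S \<times> S) \<union> C"
    using coupling_cost_attained[OF fin ne, of d x'] x'_bounded by (auto simp: min_def)
  ultimately show ?thesis unfolding C_def by blast
qed

lemma lift_attained:
  assumes fin: "finite S" and ne: "S \<noteq> {}" and "\<forall>x. 0 \<le> \<mu> x" "\<forall>x. 0 \<le> \<eta> x"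
    and eq: "fmax S \<mu> = fmax S \<eta>"
  shows "\<exists>x. coupling S \<mu> \<eta> x \<and> lift S d \<mu> \<eta> = coupling_cost S d x \<and>
    (\<forall>x'. coupling S \<mu> \<eta> x' \<longrightarrow> coupling_cost S d x \<le> coupling_cost S d x') \<and>
    coupling_cost S d x \<in> case_prod d ` (S \<times> S) \<union> insert 0 (\<mu> ` S \<union> \<eta> ` S)"
proof -
  define C where "C = case_prod d ` (S \<times> S) \<union> insert 0 (\<mu> ` S \<union> \<eta> ` S)"
  define T where "T = {t \<in> C. \<exists>x. coupling S \<mu> \<eta> x \<and> coupling_cost S d x = t}"
  have "finite T" using fin by (simp add: T_def C_def)
  have rounded: "\<exists>t\<in>T. t \<le> coupling_cost S d x" if "coupling S \<mu> \<eta> x" for x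
    using coupling_rounding[OF fin ne that, of d] unfolding T_def C_def by blast
  then have "T \<noteq> {}" using coupling_min_marginals[OF assms] by blast
  then have "Min T \<in> T" using \<open>finite T\<close> by simp
  then obtain x where x: "coupling S \<mu> \<eta> x" "coupling_cost S d x = Min T" "Min T \<in> C"
    unfolding T_def by blast
  have optimal: "coupling_cost S d x \<le> coupling_cost S d x'" if x': "coupling S \<mu> \<eta> x'" for x'
  proof -
    obtain t where "t \<in> T" "t \<le> coupling_cost S d x'" using rounded[OF x'] by blast
    then show ?thesis using \<open>finite T\<close> x(2) by (metis Min_le order.trans)
  qed
  have "lift S d \<mu> \<eta> = Inf {coupling_cost S d x | x. coupling S \<mu> \<eta> x}"
    using eq by (simp add: lift_def coupling_cost_def)
  also have "\<dots> = coupling_cost S d x"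
    using x(1) optimal by (intro cInf_eq_minimum) auto
  finally have "lift S d \<mu> \<eta> = coupling_cost S d x" .
  with x optimal show ?thesis unfolding C_def by metis
qed

lemma lift_mono:
  assumes "finite S" "\<forall>x. 0 \<le> \<mu> x" "\<forall>x. 0 \<le> \<eta> x" "\<forall>u\<in>S. \<forall>v\<in>S. d u v \<le> d' u v"
  shows "lift S d \<mu> \<eta> \<le> lift S d' \<mu> \<eta>"
proof (cases "fmax S \<mu> = fmax S \<eta> \<and> S \<noteq> {}")
  case True
  obtain x' where x': "coupling S \<mu> \<eta> x'" "lift S d' \<mu> \<eta> = coupling_cost S d' x'"
    using lift_attained[OF assms(1) _ assms(2,3), of d'] True by blast
  obtain x where x: "lift S d \<mu> \<eta> = coupling_cost S d x"
    "coupling_cost S d x \<le> coupling_cost S d x'"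
    using lift_attained[OF assms(1) _ assms(2,3), of d] True x'(1) by blast
  have "coupling_cost S d x' \<le> coupling_cost S d' x'"
    using assms(1,4) True by (intro coupling_cost_mono) (auto simp: min.coboundedI1)
  then show ?thesis using x x'(2) by linarith
qed (auto simp: lift_def)

lemma lift_in_values:
  assumes "finite S" "S \<noteq> {}" "\<forall>x. 0 \<le> \<mu> x" "\<forall>x. 0 \<le> \<eta> x"
  shows "lift S d \<mu> \<eta> \<in> insert 1 (case_prod d ` (S \<times> S) \<union> insert 0 (\<mu> ` S \<union> \<eta> ` S))"
  using lift_attained[OF assms, of d] by (cases "fmax S \<mu> = fmax S \<eta>") (auto simp: lift_def)

lemma lift_set_mono:
  assumes "finite S" "finite Z" "\<forall>x. 0 \<le> \<mu> x" "\<forall>\<eta>\<in>Z. \<forall>x. 0 \<le> \<eta> x"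
    "\<forall>u\<in>S. \<forall>v\<in>S. d u v \<le> d' u v"
  shows "lift_set S d \<mu> Z \<le> lift_set S d' \<mu> Z"
proof (cases "Z = {}")
  case False
  have "Min ((\<lambda>\<eta>. lift S d \<mu> \<eta>) ` Z) \<le> Min ((\<lambda>\<eta>. lift S d' \<mu> \<eta>) ` Z)"
  proof (rule Min_image_mono[OF assms(2) False])
    fix \<eta> assume "\<eta> \<in> Z"
    then show "lift S d \<mu> \<eta> \<le> lift S d' \<mu> \<eta>" using assms by (intro lift_mono) auto
  qed
  then show ?thesis using False by (simp add: lift_set_def)
qed (simp add: lift_set_def)

lemma hausdorff_mono:
  assumes "finite S" "finite Y" "finite Z" "\<forall>\<mu>\<in>Y \<union> Z. \<forall>x. 0 \<le> \<mu> x"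
    "\<forall>u\<in>S. \<forall>v\<in>S. d u v \<le> d' u v"
  shows "hausdorff S d Y Z \<le> hausdorff S d' Y Z"
proof -
  have "Max (insert 0 ((\<lambda>\<mu>. lift_set S d \<mu> Z) ` Y))
      \<le> Max (insert 0 ((\<lambda>\<mu>. lift_set S d' \<mu> Z) ` Y))"
    using assms by (intro Max_insert_image_mono lift_set_mono) auto
  moreover have "Max (insert 0 ((\<lambda>\<eta>. lift_set S d \<eta> Y) ` Z))
      \<le> Max (insert 0 ((\<lambda>\<eta>. lift_set S d' \<eta> Y) ` Z))"
    using assms by (intro Max_insert_image_mono lift_set_mono) auto
  ultimately show ?thesis unfolding hausdorff_def by (auto intro: max.mono)
qed

lemma hausdorff_in:
  assumes fin: "finite S" "S \<noteq> {}" "finite Y" "finite Z"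
    and nonneg: "\<forall>\<mu>\<in>Y \<union> Z. \<forall>x. 0 \<le> \<mu> x"
    and V: "0 \<in> V" "1 \<in> V" "\<forall>\<mu>\<in>Y \<union> Z. \<mu> ` S \<subseteq> V" "case_prod d ` (S \<times> S) \<subseteq> V"
  shows "hausdorff S d Y Z \<in> V"
proof -
  have lift: "lift S d \<mu> \<eta> \<in> V" if "\<mu> \<in> Y \<union> Z" "\<eta> \<in> Y \<union> Z" for \<mu> \<eta>
  proof -
    have "lift S d \<mu> \<eta> \<in> insert 1 (case_prod d ` (S \<times> S) \<union> insert 0 (\<mu> ` S \<union> \<eta> ` S))"
      using nonneg that by (intro lift_in_values fin) auto
    moreover have "insert 1 (case_prod d ` (S \<times> S) \<union> insert 0 (\<mu> ` S \<union> \<eta> ` S)) \<subseteq> V"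
      using V that by auto
    ultimately show ?thesis by blast
  qed
  have "lift_set S d \<mu> W \<in> V" if "\<mu> \<in> Y \<union> Z" "W = Y \<or> W = Z" for \<mu> W
  proof (cases "W = {}")
    case False
    then have "Min ((\<lambda>\<eta>. lift S d \<mu> \<eta>) ` W) \<in> (\<lambda>\<eta>. lift S d \<mu> \<eta>) ` W"
      using that fin by (intro Min_in) auto
    then show ?thesis using False lift that by (auto simp: lift_set_def)
  qed (simp add: lift_set_def V)
  then have "Max (insert 0 ((\<lambda>\<mu>. lift_set S d \<mu> Z) ` Y)) \<in> V"
    "Max (insert 0 ((\<lambda>\<eta>. lift_set S d \<eta> Y) ` Z)) \<in> V"
    using fin V(1) by (auto intro!: Max_insert_image_in)
  then show ?thesis unfolding hausdorff_def using V(1) by (simp add: max_def)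
qed

lemma Delta_mono:
  assumes "fts S A \<delta>" "0 \<le> \<gamma>" "\<forall>u\<in>S. \<forall>v\<in>S. d u v \<le> d' u v"
  shows "\<forall>s\<in>S. \<forall>t\<in>S. Delta \<gamma> S A \<delta> d s t \<le> Delta \<gamma> S A \<delta> d' s t"
proof (intro ballI)
  fix s t assume "s \<in> S" "t \<in> S"
  then have "hausdorff S d (\<delta> s a) (\<delta> t a) \<le> hausdorff S d' (\<delta> s a) (\<delta> t a)" if "a \<in> A" for a
    using assms that by (intro hausdorff_mono) (auto simp: fts_def fuzzy_set_on_def)
  then have "Max (insert 0 ((\<lambda>a. hausdorff S d (\<delta> s a) (\<delta> t a)) ` A))
      \<le> Max (insert 0 ((\<lambda>a. hausdorff S d' (\<delta> s a) (\<delta> t a)) ` A))"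
    using assms(1) by (intro Max_insert_image_mono) (auto simp: fts_def)
  then show "Delta \<gamma> S A \<delta> d s t \<le> Delta \<gamma> S A \<delta> d' s t"
    using assms(2) \<open>s \<in> S\<close> \<open>t \<in> S\<close> by (simp add: Delta_def mult_left_mono)
qed

definition fts_values :: "nat set \<Rightarrow> nat set \<Rightarrow> (nat \<Rightarrow> nat \<Rightarrow> fuzzy set) \<Rightarrow> real set" where
  "fts_values S A \<delta> = {0, 1} \<union> (\<Union>s\<in>S. \<Union>a\<in>A. \<Union>\<mu>\<in>\<delta> s a. \<mu> ` supp S \<mu>)"

definition dist_valued_in :: "nat set \<Rightarrow> real set \<Rightarrow> dist \<Rightarrow> bool" where
  "dist_valued_in S V d \<longleftrightarrow> (\<forall>s\<in>S. \<forall>t\<in>S. d s t \<in> V) \<and> (\<forall>s t. s \<notin> S \<or> t \<notin> S \<longrightarrow> d s t = 0)"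

lemma finite_fts_values: "fts S A \<delta> \<Longrightarrow> finite (fts_values S A \<delta>)"
  unfolding fts_values_def fts_def supp_def by auto

lemma fts_values_nonneg: "fts S A \<delta> \<Longrightarrow> c \<in> fts_values S A \<delta> \<Longrightarrow> 0 \<le> c"
  by (auto simp: fts_values_def fts_def fuzzy_set_on_def)

lemma membership_in_fts_values:
  assumes "fts S A \<delta>" "s \<in> S" "a \<in> A" "\<mu> \<in> \<delta> s a" "x \<in> S"
  shows "\<mu> x \<in> fts_values S A \<delta>"
proof (cases "\<mu> x = 0")
  case False
  then have "x \<in> supp S \<mu>"
    using assms by (auto simp: supp_def fts_def fuzzy_set_on_def order.order_iff_strict)
  then show ?thesis unfolding fts_values_def using assms by blast
qed (simp add: fts_values_def)

lemma card_fts_values_le: "fts S A \<delta> \<Longrightarrow> card (fts_values S A \<delta>) \<le> fts_size S A \<delta> + 2"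
proof -
  assume f: "fts S A \<delta>"
  then have fin: "finite S" "finite A" "\<And>s a. s \<in> S \<Longrightarrow> a \<in> A \<Longrightarrow> finite (\<delta> s a)"
    by (auto simp: fts_def)
  let ?U = "\<Union>s\<in>S. \<Union>a\<in>A. \<Union>\<mu>\<in>\<delta> s a. \<mu> ` supp S \<mu>"
  have "card ?U \<le> (\<Sum>s\<in>S. card (\<Union>a\<in>A. \<Union>\<mu>\<in>\<delta> s a. \<mu> ` supp S \<mu>))"
    by (rule card_UN_le[OF fin(1)])
  also have "\<dots> \<le> (\<Sum>s\<in>S. \<Sum>a\<in>A. card (\<Union>\<mu>\<in>\<delta> s a. \<mu> ` supp S \<mu>))"
    by (intro sum_mono card_UN_le fin(2))
  also have "\<dots> \<le> (\<Sum>s\<in>S. \<Sum>a\<in>A. \<Sum>\<mu>\<in>\<delta> s a. card (\<mu> ` supp S \<mu>))"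
    by (intro sum_mono card_UN_le fin(3))
  also have "\<dots> \<le> (\<Sum>s\<in>S. \<Sum>a\<in>A. \<Sum>\<mu>\<in>\<delta> s a. card (supp S \<mu>))"
    by (intro sum_mono card_image_le) (simp add: supp_def fin(1))
  finally have "card ?U \<le> fts_size S A \<delta>" by (simp add: fts_size_def)
  moreover have "card (fts_values S A \<delta>) \<le> card {0::real, 1} + card ?U"
    unfolding fts_values_def by (rule card_Un_le)
  ultimately show ?thesis by simp
qed

lemma Delta_valued_in:
  assumes f: "fts S A \<delta>" and d: "dist_valued_in S (fts_values S A \<delta>) d"
  shows "dist_valued_in S (fts_values S A \<delta>) (Delta 1 S A \<delta> d)"
proof -
  let ?V = "fts_values S A \<delta>"
  have V: "0 \<in> ?V" "1 \<in> ?V" by (auto simp: fts_values_def)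
  have "hausdorff S d (\<delta> s a) (\<delta> t a) \<in> ?V" if "s \<in> S" "t \<in> S" "a \<in> A" for s t a
    using that f d V membership_in_fts_values[OF f]
    by (intro hausdorff_in) (auto simp: fts_def fuzzy_set_on_def dist_valued_in_def)
  then have "Max (insert 0 ((\<lambda>a. hausdorff S d (\<delta> s a) (\<delta> t a)) ` A)) \<in> ?V"
    if "s \<in> S" "t \<in> S" for s t
    using f V(1) that by (intro Max_insert_image_in) (auto simp: fts_def)
  then show ?thesis by (simp add: dist_valued_in_def Delta_def)
qed

lemma iter_dist_Suc: "iter_dist \<gamma> S A \<delta> (Suc n) = Delta \<gamma> S A \<delta> (iter_dist \<gamma> S A \<delta> n)"
  by (simp add: iter_dist_def)

lemma iter_dist_valued_in:
  "fts S A \<delta> \<Longrightarrow> dist_valued_in S (fts_values S A \<delta>) (iter_dist 1 S A \<delta> n)"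
  by (induction n)
    (simp_all add: iter_dist_Suc Delta_valued_in,
     simp add: iter_dist_def bot_dist_def dist_valued_in_def fts_values_def)

lemma iter_dist_increasing:
  assumes "fts S A \<delta>"
  shows "\<forall>s\<in>S. \<forall>t\<in>S. iter_dist 1 S A \<delta> n s t \<le> iter_dist 1 S A \<delta> (Suc n) s t"
proof (induction n)
  case 0
  show ?case
    using iter_dist_valued_in[OF assms, of 1] fts_values_nonneg[OF assms]
    by (simp add: dist_valued_in_def iter_dist_def bot_dist_def)
next
  case (Suc n)
  then show ?case using Delta_mono[OF assms] by (simp add: iter_dist_Suc)
qed

lemma first_stable_index_le:
  fixes D :: "nat \<Rightarrow> 'a" and r :: "'a \<Rightarrow> nat"
  assumes grows: "\<And>n. D n \<noteq> D (Suc n) \<Longrightarrow> r (D n) < r (D (Suc n))"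
    and bounded: "\<And>n. r (D n) \<le> B"
  shows "\<exists>n. D n = D (Suc n) \<and> (\<forall>m<n. D m \<noteq> D (Suc m)) \<and> n \<le> B"
proof -
  have unstable: "n \<le> r (D n)" if "\<forall>m<n. D m \<noteq> D (Suc m)" for n
    using that
  proof (induction n)
    case (Suc n)
    then show ?case using grows[of n] by fastforce
  qed simp
  have "\<exists>n\<le>B. D n = D (Suc n)"
  proof (rule ccontr)
    assume "\<not> ?thesis"
    then have "Suc B \<le> r (D (Suc B))" by (intro unstable) auto
    then show False using bounded[of "Suc B"] by simp
  qed
  then obtain n0 where n0: "n0 \<le> B" "D n0 = D (Suc n0)" by blast
  define n where "n = (LEAST n. D n = D (Suc n))"
  have "D n = D (Suc n)" unfolding n_def using n0(2) by (rule LeastI)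
  moreover have "\<forall>m<n. D m \<noteq> D (Suc m)" unfolding n_def using not_less_Least by blast
  moreover have "n \<le> n0" unfolding n_def using n0(2) by (rule Least_le)
  ultimately show ?thesis using n0(1) by (meson order.trans)
qed

definition rank :: "nat set \<Rightarrow> real set \<Rightarrow> dist \<Rightarrow> nat" where
  "rank S V d = (\<Sum>(u, v)\<in>S \<times> S. card {c \<in> V. c \<le> d u v})"

lemma rank_le: "finite V \<Longrightarrow> rank S V d \<le> card S * card S * card V"
  unfolding rank_def
  using sum_bounded_above[of "S \<times> S" "\<lambda>(u, v). card {c \<in> V. c \<le> d u v}" "card V"]
  by (auto simp: card_mono card_cartesian_product)

lemma rank_strict_mono:
  assumes "finite S" "finite V" "dist_valued_in S V d" "dist_valued_in S V d'"
    and le: "\<forall>u\<in>S. \<forall>v\<in>S. d u v \<le> d' u v" and "d \<noteq> d'"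
  shows "rank S V d < rank S V d'"
proof -
  obtain s t where "d s t \<noteq> d' s t" using \<open>d \<noteq> d'\<close> by blast
  with assms(3,4) have st: "s \<in> S" "t \<in> S" unfolding dist_valued_in_def by metis+
  have sub: "{c \<in> V. c \<le> d u v} \<subseteq> {c \<in> V. c \<le> d' u v}" if "u \<in> S" "v \<in> S" for u v
    using le that by force
  have "d s t < d' s t" using \<open>d s t \<noteq> d' s t\<close> le st by force
  moreover have "d' s t \<in> V" using assms(4) st by (simp add: dist_valued_in_def)
  ultimately have "{c \<in> V. c \<le> d s t} \<subset> {c \<in> V. c \<le> d' s t}" using sub[OF st] by force
  then have "card {c \<in> V. c \<le> d s t} < card {c \<in> V. c \<le> d' s t}"
    using assms(2) by (intro psubset_card_mono) auto
  then show ?thesis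
    unfolding rank_def using assms(1,2) sub st
    by (intro sum_strict_mono_ex1) (auto intro!: card_mono)
qed

lemma iter_dist_stable_within:
  assumes f: "fts S A \<delta>"
  shows "\<exists>n. iter_dist 1 S A \<delta> n = iter_dist 1 S A \<delta> (Suc n)
    \<and> (\<forall>m<n. iter_dist 1 S A \<delta> m \<noteq> iter_dist 1 S A \<delta> (Suc m))
    \<and> n \<le> card S * card S * card (fts_values S A \<delta>)"
proof (rule first_stable_index_le)
  let ?D = "iter_dist 1 S A \<delta>" and ?V = "fts_values S A \<delta>"
  show "rank S ?V (?D n) < rank S ?V (?D (Suc n))" if "?D n \<noteq> ?D (Suc n)" for n
    using f finite_fts_values[OF f] iter_dist_valued_in[OF f] iter_dist_increasing[OF f] that
    by (intro rank_strict_mono) (auto simp: fts_def)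
  show "rank S ?V (?D n) \<le> card S * card S * card ?V" for n
    by (rule rank_le[OF finite_fts_values[OF f]])
qed

lemma card_pairs_times_fts_values_le:
  assumes f: "fts S A \<delta>"
  shows "card S * card S * card (fts_values S A \<delta>) \<le> 3 * fts_size S A \<delta> ^ 3"
proof (cases "card S = 0")
  case False
  let ?z = "fts_size S A \<delta>"
  have S: "card S \<le> ?z" by (simp add: fts_size_def)
  with False have "card (fts_values S A \<delta>) \<le> 3 * ?z" using card_fts_values_le[OF f] by linarith
  then have "card S * card S * card (fts_values S A \<delta>) \<le> ?z * ?z * (3 * ?z)"
    using S by (intro mult_le_mono)
  then show ?thesis by (simp add: power3_eq_cube algebra_simps)
qed simp

theorem proposition3:
  shows "\<exists>c k :: nat. \<forall>S A \<delta>. fts S A \<delta> \<longrightarrow>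
     (\<exists>n. iter_dist 1 S A \<delta> n = iter_dist 1 S A \<delta> (Suc n)
        \<and> (\<forall>m<n. iter_dist 1 S A \<delta> m \<noteq> iter_dist 1 S A \<delta> (Suc m))
        \<and> n \<le> c * (fts_size S A \<delta>) ^ k)"
proof (rule exI[of _ 3], rule exI[of _ 3], intro allI impI)
  fix S A \<delta> assume f: "fts S A \<delta>"
  then obtain n where "iter_dist 1 S A \<delta> n = iter_dist 1 S A \<delta> (Suc n)"
    "\<forall>m<n. iter_dist 1 S A \<delta> m \<noteq> iter_dist 1 S A \<delta> (Suc m)"
    "n \<le> card S * card S * card (fts_values S A \<delta>)"
    using iter_dist_stable_within by blast
  moreover note card_pairs_times_fts_values_le[OF f]
  ultimately show "\<exists>n. iter_dist 1 S A \<delta> n = iter_dist 1 S A \<delta> (Suc n)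
      \<and> (\<forall>m<n. iter_dist 1 S A \<delta> m \<noteq> iter_dist 1 S A \<delta> (Suc m))
      \<and> n \<le> 3 * fts_size S A \<delta> ^ 3"
    by (meson order.trans)
qed

end
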